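(* Let $S$ be a semidomain. If $S[x]$ is a length-factorial semidomain, then $S$ is an integral domain.
   Context: A semidomain is a subset $S$ of an integral domain $R$ containing $0$ and $1$ and closed under addition and multiplication; $S[x]$ is the semidomain of polynomials in $R[x]$ with coefficients in $S$. For a semidomain $T$, $T^*=T\setminus\{0\}$ is a multiplicative monoid; an atom is a nonunit $a\in T^*$ such that $a=bc$ with $b,c\in T^*$ forces $b$ or $c$ to be a unit; $T$ is atomic if every nonunit of $T^*$ is a finite product of atoms. A factorization of $b$ is a formal product of atoms (considered up to order and up to replacing atoms by associates) equal to $b$ up to a unit; its length is the number of atoms counted with multiplicity. $T$ is a length-factorial semidomain (LFS) if $T$ is atomic and any two distinct factorizations of the same element have distinct lengths. *)

theory Defs
  imports "HOL-Computational_Algebra.Polynomial" "HOL-Library.Multiset"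
begin

definition semidomain :: "'a::idom set \<Rightarrow> bool" where
  "semidomain T \<longleftrightarrow> 0 \<in> T \<and> 1 \<in> T \<and>
     (\<forall>a\<in>T. \<forall>b\<in>T. a + b \<in> T) \<and> (\<forall>a\<in>T. \<forall>b\<in>T. a * b \<in> T)"

definition polys :: "'a::idom set \<Rightarrow> 'a poly set" where
  "polys S = {p. \<forall>i. coeff p i \<in> S}"

definition sd_unit :: "'a::idom set \<Rightarrow> 'a \<Rightarrow> bool" where
  "sd_unit T u \<longleftrightarrow> u \<in> T - {0} \<and> (\<exists>v\<in>T - {0}. u * v = 1)"

definition sd_assoc :: "'a::idom set \<Rightarrow> 'a \<Rightarrow> 'a \<Rightarrow> bool" where
  "sd_assoc T a b \<longleftrightarrow> (\<exists>u. sd_unit T u \<and> a = u * b)"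

definition sd_atom :: "'a::idom set \<Rightarrow> 'a \<Rightarrow> bool" where
  "sd_atom T a \<longleftrightarrow> a \<in> T - {0} \<and> \<not> sd_unit T a \<and>
     (\<forall>b\<in>T - {0}. \<forall>c\<in>T - {0}. a = b * c \<longrightarrow> sd_unit T b \<or> sd_unit T c)"

definition sd_factorization :: "'a::idom set \<Rightarrow> 'a \<Rightarrow> 'a list \<Rightarrow> bool" where
  "sd_factorization T b xs \<longleftrightarrow> (\<forall>x\<in>set xs. sd_atom T x) \<and> sd_assoc T b (prod_list xs)"

definition sd_fact_equiv :: "'a::idom set \<Rightarrow> 'a list \<Rightarrow> 'a list \<Rightarrow> bool" where
  "sd_fact_equiv T xs ys \<longleftrightarrow> (\<exists>zs. mset zs = mset ys \<and> list_all2 (sd_assoc T) xs zs)"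

definition sd_atomic :: "'a::idom set \<Rightarrow> bool" where
  "sd_atomic T \<longleftrightarrow> (\<forall>b\<in>T - {0}. \<not> sd_unit T b \<longrightarrow>
     (\<exists>xs. xs \<noteq> [] \<and> (\<forall>x\<in>set xs. sd_atom T x) \<and> b = prod_list xs))"

definition length_factorial :: "'a::idom set \<Rightarrow> bool" where
  "length_factorial T \<longleftrightarrow> sd_atomic T \<and>
     (\<forall>b\<in>T - {0}. \<forall>xs ys. sd_factorization T b xs \<and> sd_factorization T b ys \<and>
        \<not> sd_fact_equiv T xs ys \<longrightarrow> length xs \<noteq> length ys)"

end

theory Submission
  imports Defs
begin

text \<open>
  If \<open>-1 \<in> S\<close> then \<open>S = -S\<close>. Otherwise, in \<open>S[x]\<close> we have
  \<open>(1 + x)(1 + x\<^sup>2 + x\<^sup>4) = (1 + x\<^sup>3)(1 + x + x\<^sup>2)\<close>, and all four factors are atoms: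
  comparing coefficients, any splitting of one of them into nonconstant factors with
  coefficients in \<open>S\<close> exhibits \<open>-1\<close> as a product of elements of \<open>S\<close>, either directly or as
  a cube \<open>t\<^sup>3\<close> with \<open>t + s = t s = 1\<close>. These are two factorizations of length 2 which
  are not equivalent, since associates in \<open>S[x]\<close> have equal degree and the degrees are
  \<open>{1, 4}\<close> versus \<open>{3, 2}\<close>.
\<close>

lemma semidomain_mult_mem: "semidomain S \<Longrightarrow> a \<in> S \<Longrightarrow> b \<in> S \<Longrightarrow> a * b \<in> S"
  by (simp add: semidomain_def)

lemma semidomain_sum_mem:
  assumes "semidomain S" and "\<And>i. i \<in> A \<Longrightarrow> f i \<in> S"
  shows "sum f A \<in> S"
  using assms(2)
proof (induction A rule: infinite_finite_induct)
  case (insert i A)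
  then show ?case using assms(1) by (simp add: semidomain_def)
qed (use assms(1) in \<open>simp_all add: semidomain_def\<close>)

lemma semidomain_polys: "semidomain S \<Longrightarrow> semidomain (polys S)"
  unfolding semidomain_def[of "polys S"] polys_def
  by (auto simp: coeff_mult semidomain_def intro!: semidomain_sum_mem)

lemma pCons_mem_polys_iff [simp]: "pCons a q \<in> polys S \<longleftrightarrow> a \<in> S \<and> q \<in> polys S"
proof -
  have "(\<forall>i. coeff (pCons a q) i \<in> S) \<longleftrightarrow>
      coeff (pCons a q) 0 \<in> S \<and> (\<forall>i. coeff (pCons a q) (Suc i) \<in> S)"
    by (metis not0_implies_Suc)
  then show ?thesis by (simp add: polys_def)
qed

lemma zero_mem_polys [simp]: "semidomain S \<Longrightarrow> 0 \<in> polys S"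
  by (simp add: polys_def semidomain_def)

lemma sd_unit_polys_degree: "sd_unit (polys S) u \<Longrightarrow> degree u = 0"
  unfolding sd_unit_def by (metis DiffE add_is_0 degree_1 degree_mult_eq insertI1)

lemma sd_assoc_polys_degree: "sd_assoc (polys S) a b \<Longrightarrow> degree a = degree b"
  unfolding sd_assoc_def
  by (metis add_0 degree_mult_eq mult_zero_right sd_unit_def sd_unit_polys_degree DiffE insertI1)

lemma sd_unit_polys_const:
  assumes "semidomain S" and "a \<in> S" and "c \<in> S" and "a * c = 1"
  shows "sd_unit (polys S) [:a:]"
proof -
  have "[:a:] * [:c:] = 1" using assms(4) by (simp add: one_pCons mult.commute)
  moreover have "[:a:] \<in> polys S - {0}" "[:c:] \<in> polys S - {0}" using assms by auto
  ultimately show ?thesis unfolding sd_unit_def by blast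
qed

lemma sd_atom_polysI:
  assumes sd: "semidomain S" and p: "p \<in> polys S" "0 < degree p" "coeff p 0 = 1"
    and no_split: "\<And>b c. b \<in> polys S \<Longrightarrow> c \<in> polys S \<Longrightarrow> b * c = p \<Longrightarrow>
      degree b + degree c = degree p \<Longrightarrow> 0 < degree b \<Longrightarrow> degree b \<le> degree c \<Longrightarrow> False"
  shows "sd_atom (polys S) p"
  unfolding sd_atom_def
proof (intro conjI ballI impI)
  show "p \<in> polys S - {0}" using p(1,2) by auto
  show "\<not> sd_unit (polys S) p" using p(2) by (auto dest: sd_unit_polys_degree)
next
  fix b c assume b: "b \<in> polys S - {0}" and c: "c \<in> polys S - {0}" and p_eq: "p = b * c"
  have const_unit: "sd_unit (polys S) u"
    if "u \<in> polys S" "v \<in> polys S" "u * v = p" "degree u = 0" for u v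
  proof -
    obtain a where u: "u = [:a:]" using \<open>degree u = 0\<close> by (rule degree_eq_zeroE)
    have "a \<in> S" using that(1) unfolding u by simp
    moreover have "coeff v 0 \<in> S" using that(2) by (simp add: polys_def)
    moreover have "a * coeff v 0 = 1" using p(3) that(3) coeff_mult_0[of u v] u by simp
    ultimately show ?thesis unfolding u by (rule sd_unit_polys_const[OF sd])
  qed
  have bc: "b \<in> polys S" "c \<in> polys S" "b \<noteq> 0" "c \<noteq> 0" using b c by auto
  have cb_eq: "c * b = p" using p_eq by (simp add: mult.commute)
  have deg: "degree b + degree c = degree p" using bc p_eq by (simp add: degree_mult_eq)
  then have deg': "degree c + degree b = degree p" by simp
  consider "degree b = 0" | "degree c = 0" | "0 < degree b" "degree b \<le> degree c"
    | "0 < degree c" "degree c \<le> degree b" by linarith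
  then show "sd_unit (polys S) b \<or> sd_unit (polys S) c"
  proof cases
    case 1 then show ?thesis using const_unit[OF bc(1,2) p_eq[symmetric]] by blast
  next
    case 2 then show ?thesis using const_unit[OF bc(2,1) cb_eq] by blast
  next
    case 3 then show ?thesis using no_split[OF bc(1,2) p_eq[symmetric] deg] by blast
  next
    case 4 then show ?thesis using no_split[OF bc(2,1) cb_eq deg'] by blast
  qed
qed

lemma cube_eq_minus_one:
  fixes t s :: "'a::idom"
  assumes "t + s = 1" and "t * s = 1"
  shows "t ^ 3 = -1"
proof -
  have "t ^ 3 + 1 = (t + 1) * (t * t - t * (t + s) + t * s)"
    using assms by (simp add: algebra_simps power3_eq_cube)
  also have "\<dots> = 0" by (simp add: algebra_simps)
  finally show ?thesis by (simp add: add_eq_0_iff2)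
qed

lemma degree_le_1_eq: "degree p \<le> 1 \<Longrightarrow> p = [:coeff p 0, coeff p 1:]"
  by (rule poly_eqI) (auto simp: coeff_pCons coeff_eq_0 split: nat.split)

lemma degree_le_2_eq: "degree p \<le> 2 \<Longrightarrow> p = [:coeff p 0, coeff p 1, coeff p 2:]"
  by (rule poly_eqI) (auto simp: coeff_pCons coeff_eq_0 numeral_2_eq_2 split: nat.split)

lemma minus_one_mem_if_linear_factor:
  assumes sd: "semidomain S" and b: "b \<in> polys S" and c: "c \<in> polys S" and "degree b = 1"
    and const: "coeff (b * c) 0 = 1" and linear: "coeff (b * c) 1 = 0"
    and lead: "lead_coeff (b * c) = 1"
  shows "-1 \<in> S"
proof -
  define b0 b1 c0 c1 cn where b0_def: "b0 = coeff b 0" and b1_def: "b1 = coeff b 1"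
    and c0_def: "c0 = coeff c 0" and c1_def: "c1 = coeff c 1" and cn_def: "cn = lead_coeff c"
  have b_eq: "b = [:b0, b1:]" using \<open>degree b = 1\<close> degree_le_1_eq[of b] by (simp add: b0_def b1_def)
  have "b0 * c0 = 1" using const by (simp add: b_eq c0_def)
  have "b0 * c1 + b1 * c0 = 0" using linear by (simp add: b_eq c0_def c1_def coeff_pCons)
  then have "b0 * c1 * cn * b0 = - ((b1 * cn) * (b0 * c0))"
    by (simp add: eq_neg_iff_add_eq_0[symmetric] algebra_simps)
  also have "\<dots> = -1"
    using \<open>b0 * c0 = 1\<close> lead \<open>degree b = 1\<close> by (simp add: lead_coeff_mult b1_def cn_def)
  finally have "b0 * c1 * cn * b0 = -1" .
  moreover have "b0 * c1 * cn * b0 \<in> S"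
    using sd b c by (simp add: b0_def c1_def cn_def polys_def semidomain_mult_mem)
  ultimately show ?thesis by simp
qed

lemma minus_one_mem_if_quadratic_factors:
  assumes sd: "semidomain S" and S: "a \<in> S" "b \<in> S" "c \<in> S" "d \<in> S"
    and eq: "[:a, b:] * [:c, d:] = [:1, 1, 1:]"
  shows "-1 \<in> S"
proof -
  have "a * c = 1" "a * d + b * c = 1" "b * d = 1" using eq by (simp_all add: algebra_simps)
  then have "(a * d) + (b * c) = 1" "(a * d) * (b * c) = 1"
    by (simp_all add: algebra_simps) (metis mult.assoc mult.left_commute mult_1)
  then have "(a * d) ^ 3 = -1" by (rule cube_eq_minus_one)
  moreover have "(a * d) ^ 3 \<in> S" using sd S by (simp add: power3_eq_cube semidomain_mult_mem)
  ultimately show ?thesis by simp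
qed

lemma minus_one_mem_if_quartic_factors:
  assumes sd: "semidomain S" and S: "a \<in> S" "b \<in> S" "c \<in> S" "d \<in> S" "e \<in> S" "f \<in> S"
    and eq: "[:a, b, c:] * [:d, e, f:] = [:1, 0, 1, 0, 1:]"
  shows "-1 \<in> S"
proof -
  have h: "a * d = 1" "a * e + b * d = 0" "a * f + b * e + c * d = 1" "b * f + c * e = 0" "c * f = 1"
    using eq by (simp_all add: algebra_simps)
  have af_S: "a * f \<in> S" and be_S: "b * e \<in> S" using sd S by (simp_all add: semidomain_mult_mem)
  show ?thesis
  proof (cases "e = 0")
    case True
    then have "b = 0" using h(1,2) by auto
    then have "a * f + c * d = 1" using h(3) by simp
    moreover have "(a * f) * (c * d) = 1"
      using h(1,5) by (metis mult.assoc mult.commute mult_1)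
    ultimately have "(a * f) ^ 3 = -1" by (rule cube_eq_minus_one)
    moreover have "(a * f) ^ 3 \<in> S" using sd af_S by (simp add: power3_eq_cube semidomain_mult_mem)
    ultimately show ?thesis by simp
  next
    case False
    have "a * (a * e + b * d) = a * a * e + b * (a * d)" by (simp add: algebra_simps)
    then have "b = - (a * a * e)" using h(1,2) by (simp add: eq_neg_iff_add_eq_0 add.commute)
    then have "e * (c - a * a * f) = 0" using h(4) by (simp add: algebra_simps)
    then have c_eq: "c = a * a * f" using False by simp
    then have "(a * f - 1) * (a * f + 1) = 0" using h(5) by (simp add: algebra_simps)
    then consider "a * f = 1" | "a * f = -1" by (auto simp: eq_neg_iff_add_eq_0)
    then show ?thesis
    proof cases
      case 1
      then have "c * d = 1" using c_eq h(1) by (metis mult.assoc mult.commute mult_1)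
      then have "b * e = -1" using h(3) 1 by (simp add: eq_neg_iff_add_eq_0 add.commute)
      then show ?thesis using be_S by simp
    next
      case 2
      then show ?thesis using af_S by simp
    qed
  qed
qed

lemma sd_atom_polys_1_plus_x:
  assumes sd: "semidomain S"
  shows "sd_atom (polys S) [:1, 1:]"
  by (rule sd_atom_polysI[OF sd]) (use sd in \<open>auto simp: semidomain_def\<close>)

lemma sd_atom_polys_1_plus_x_plus_x2:
  assumes sd: "semidomain S" and no_minus_one: "-1 \<notin> S"
  shows "sd_atom (polys S) [:1, 1, 1:]"
proof (rule sd_atom_polysI[OF sd])
  fix b c assume b: "b \<in> polys S" and c: "c \<in> polys S" and eq: "b * c = [:1, 1, 1:]"
    and "degree b + degree c = degree ([:1, 1, 1:] :: 'a poly)" "0 < degree b" "degree b \<le> degree c"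
  then have "degree b = 1" "degree c = 1" by simp_all
  then have factors: "[:coeff b 0, coeff b 1:] * [:coeff c 0, coeff c 1:] = [:1, 1, 1:]"
    using eq degree_le_1_eq[of b] degree_le_1_eq[of c] by simp
  have "-1 \<in> S"
    using b c
    by (intro minus_one_mem_if_quadratic_factors[OF sd _ _ _ _ factors]) (simp_all add: polys_def)
  with no_minus_one show False ..
qed (use sd in \<open>auto simp: semidomain_def\<close>)

lemma sd_atom_polys_1_plus_x3:
  assumes sd: "semidomain S" and no_minus_one: "-1 \<notin> S"
  shows "sd_atom (polys S) [:1, 0, 0, 1:]"
proof (rule sd_atom_polysI[OF sd])
  fix b c assume b: "b \<in> polys S" and c: "c \<in> polys S" and eq: "b * c = [:1, 0, 0, 1:]"
    and "degree b + degree c = degree ([:1, 0, 0, 1:] :: 'a poly)" "0 < degree b" "degree b \<le> degree c"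
  then have "degree b = 1" by simp
  then have "-1 \<in> S" by (rule minus_one_mem_if_linear_factor[OF sd b c]) (simp_all add: eq)
  with no_minus_one show False ..
qed (use sd in \<open>auto simp: semidomain_def\<close>)

lemma sd_atom_polys_1_plus_x2_plus_x4:
  assumes sd: "semidomain S" and no_minus_one: "-1 \<notin> S"
  shows "sd_atom (polys S) [:1, 0, 1, 0, 1:]"
proof (rule sd_atom_polysI[OF sd])
  fix b c assume b: "b \<in> polys S" and c: "c \<in> polys S" and eq: "b * c = [:1, 0, 1, 0, 1:]"
    and "degree b + degree c = degree ([:1, 0, 1, 0, 1:] :: 'a poly)" "0 < degree b" "degree b \<le> degree c"
  then consider "degree b = 1" | "degree b = 2" "degree c = 2" by fastforce
  then have "-1 \<in> S"
  proof cases
    case 1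
    then show ?thesis by (rule minus_one_mem_if_linear_factor[OF sd b c]) (simp_all add: eq)
  next
    case 2
    then have factors: "[:coeff b 0, coeff b 1, coeff b 2:] * [:coeff c 0, coeff c 1, coeff c 2:]
        = [:1, 0, 1, 0, 1:]"
      using eq degree_le_2_eq[of b] degree_le_2_eq[of c] by simp
    show ?thesis
      using b c
      by (intro minus_one_mem_if_quartic_factors[OF sd _ _ _ _ _ _ factors]) (simp_all add: polys_def)
  qed
  with no_minus_one show False ..
qed (use sd in \<open>auto simp: semidomain_def\<close>)

lemma semidomain_prod_list_mem: "semidomain T \<Longrightarrow> set xs \<subseteq> T \<Longrightarrow> prod_list xs \<in> T"
  by (induction xs) (simp_all add: semidomain_def)

lemma length_factorial_equal_length_imp_equiv:
  assumes lf: "length_factorial T" and sd: "semidomain T"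
    and atoms: "\<forall>x\<in>set xs. sd_atom T x" "\<forall>y\<in>set ys. sd_atom T y"
    and eq: "prod_list xs = prod_list ys" and len: "length xs = length ys"
  shows "sd_fact_equiv T xs ys"
proof -
  have "sd_unit T 1" using sd by (auto simp: sd_unit_def semidomain_def)
  then have "sd_factorization T (prod_list xs) xs" "sd_factorization T (prod_list xs) ys"
    using atoms eq by (auto simp: sd_factorization_def sd_assoc_def)
  moreover have "prod_list xs \<in> T - {0}"
    using atoms(1) semidomain_prod_list_mem[OF sd, of xs] by (auto simp: sd_atom_def prod_list_zero_iff)
  ultimately show ?thesis using lf len unfolding length_factorial_def by blast
qed

lemma sd_fact_equiv_imp_mset_map_eq:
  assumes "sd_fact_equiv T xs ys" and invariant: "\<And>a b. sd_assoc T a b \<Longrightarrow> f a = f b"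
  shows "mset (map f xs) = mset (map f ys)"
proof -
  obtain zs where zs: "mset zs = mset ys" "list_all2 (sd_assoc T) xs zs"
    using \<open>sd_fact_equiv T xs ys\<close> unfolding sd_fact_equiv_def by blast
  from zs(2) have "map f xs = map f zs"
    by (induction rule: list_all2_induct) (simp_all add: invariant)
  then show ?thesis using zs(1) by (metis mset_map)
qed

theorem corollary5p3:
  fixes S :: "'a::idom set"
  assumes "semidomain S"
    and "length_factorial (polys S)"
  shows "\<forall>s\<in>S. - s \<in> S"
proof (cases "-1 \<in> S")
  case True
  then show ?thesis using semidomain_mult_mem[OF assms(1)] by (metis mult_minus1)
next
  case False
  let ?xs = "[[:1, 1:], [:1, 0, 1, 0, 1:]] :: 'a poly list"
  let ?ys = "[[:1, 0, 0, 1:], [:1, 1, 1:]] :: 'a poly list"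
  have "sd_fact_equiv (polys S) ?xs ?ys"
  proof (rule length_factorial_equal_length_imp_equiv[OF assms(2) semidomain_polys[OF assms(1)]])
    show "\<forall>x\<in>set ?xs. sd_atom (polys S) x" "\<forall>y\<in>set ?ys. sd_atom (polys S) y"
      using sd_atom_polys_1_plus_x sd_atom_polys_1_plus_x2_plus_x4 sd_atom_polys_1_plus_x3
        sd_atom_polys_1_plus_x_plus_x2 assms(1) False by auto
    show "prod_list ?xs = prod_list ?ys" by (simp add: algebra_simps)
  qed simp
  then have "mset (map degree ?xs) = mset (map degree ?ys)"
    by (rule sd_fact_equiv_imp_mset_map_eq) (rule sd_assoc_polys_degree)
  then show ?thesis by (simp add: add_eq_conv_ex)
qed

end
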